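(* Let $\mathcal{H}_A,\mathcal{H}_B$ have finite dimensions $d_A,d_B$, and put $d=\min\{d_A,d_B\}$, $D=\max\{d_A,d_B\}$. Let $\{P_k^A\}_{k=1}^{d^2}$ be a regular, coherent, degree-1 quantum design with $r=1$ in dimension $d_A$ having $d^2$ elements, and $\{P_k^B\}_{k=1}^{d^2}$ a regular, coherent, degree-1 quantum design with $r=1$ in dimension $d_B$ having $d^2$ elements. Define $$\rho=\frac{1}{d^2}\sum_{k=1}^{d^2}P_k^A\otimes P_k^B.$$ Then the operator-Schmidt coefficients of $\rho$ are $\alpha=1/\sqrt{Dd}$ with multiplicity one and $\beta=\sqrt{\frac{D-1}{D(d^2-1)}\cdot\frac{d-1}{d(d^2-1)}}$ with multiplicity $d^2-1$.
   Context: A quantum design in dimension $b$ with $v$ elements is a set of $v$ orthogonal projections $\{P_k\}_{k=1}^v$ on $\mathbb{C}^b$. It is regular with $r=1$ if every $P_k$ has rank one; coherent if $\sum_k P_k$ is a scalar multiple of the identity; and of degree 1 if there is $\mu\in\mathbb{R}$ with $\mathrm{tr}(P_kP_l)=\mu$ for all $k\ne l$. The operator-Schmidt decomposition of a state $\rho$ on $\mathcal{H}_A\otimes\mathcal{H}_B$ is a decomposition $\rho=\sum_{k=1}^{d^2}\lambda_k G_k\otimes H_k$ with real $\lambda_k\ge0$, where $\{G_k\}$ and $\{H_k\}$ are orthonormal sets (w.r.t. the Hilbert–Schmidt inner product $\mathrm{tr}(XY)$) of Hermitian operators on $\mathcal{H}_A$ and $\mathcal{H}_B$ respectively; the $\lambda_k$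 (with multiplicity) are the operator-Schmidt coefficients. Equivalently, they are the singular values of the correlation matrix $\mathcal{C}_{ij}=\mathrm{tr}(\rho\,A_i\otimes B_j)$ for orthonormal bases $\{A_i\}$, $\{B_j\}$ of the Hermitian operators on $\mathcal{H}_A$, $\mathcal{H}_B$. *)

theory Defs
  imports "Jordan_Normal_Form.Schur_Decomposition" "Jordan_Normal_Form.DL_Rank"
begin

definition mtrace :: "complex mat \<Rightarrow> complex" where
  "mtrace A = (\<Sum>i<dim_row A. A $$ (i,i))"

definition orth_proj :: "nat \<Rightarrow> complex mat \<Rightarrow> bool" where
  "orth_proj b P \<longleftrightarrow> P \<in> carrier_mat b b \<and> P * P = P \<and> mat_adjoint P = P"

definition hermitian_mat :: "nat \<Rightarrow> complex mat \<Rightarrow> bool" where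
  "hermitian_mat b X \<longleftrightarrow> X \<in> carrier_mat b b \<and> mat_adjoint X = X"

definition quantum_design :: "nat \<Rightarrow> nat \<Rightarrow> (nat \<Rightarrow> complex mat) \<Rightarrow> bool" where
  "quantum_design b v P \<longleftrightarrow> (\<forall>k<v. orth_proj b (P k))"

definition regular_r1 :: "nat \<Rightarrow> nat \<Rightarrow> (nat \<Rightarrow> complex mat) \<Rightarrow> bool" where
  "regular_r1 b v P \<longleftrightarrow> (\<forall>k<v. vec_space.rank b (P k) = 1)"

definition msum :: "nat \<Rightarrow> nat \<Rightarrow> (nat \<Rightarrow> complex mat) \<Rightarrow> nat set \<Rightarrow> complex mat" where
  "msum n m f K = mat n m (\<lambda>(i,j). \<Sum>k\<in>K. f k $$ (i,j))"

definition coherent :: "nat \<Rightarrow> nat \<Rightarrow> (nat \<Rightarrow> complex mat) \<Rightarrow> bool" where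
  "coherent b v P \<longleftrightarrow> (\<exists>c::complex. msum b b P {..<v} = c \<cdot>\<^sub>m 1\<^sub>m b)"

definition degree1 :: "nat \<Rightarrow> (nat \<Rightarrow> complex mat) \<Rightarrow> bool" where
  "degree1 v P \<longleftrightarrow> (\<exists>mu::real. \<forall>k<v. \<forall>l<v. k \<noteq> l \<longrightarrow> mtrace (P k * P l) = complex_of_real mu)"

text \<open>Kronecker (tensor) product of matrices; basis index of C^a (x) C^b is
  i * b + j (i < a, j < b).\<close>
definition kron :: "complex mat \<Rightarrow> complex mat \<Rightarrow> complex mat" where
  "kron A B = mat (dim_row A * dim_row B) (dim_col A * dim_col B)
     (\<lambda>(i,j). A $$ (i div dim_row B, j div dim_col B) * B $$ (i mod dim_row B, j mod dim_col B))"

definition op_schmidt_decomp ::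
  "nat \<Rightarrow> nat \<Rightarrow> complex mat \<Rightarrow> (nat \<Rightarrow> real) \<Rightarrow> (nat \<Rightarrow> complex mat) \<Rightarrow> (nat \<Rightarrow> complex mat) \<Rightarrow> bool" where
  "op_schmidt_decomp dA dB rho lam G H \<longleftrightarrow>
     (let n = (min dA dB)^2 in
       (\<forall>k<n. lam k \<ge> 0 \<and> hermitian_mat dA (G k) \<and> hermitian_mat dB (H k)) \<and>
       (\<forall>k<n. \<forall>l<n. mtrace (G k * G l) = (if k = l then 1 else 0)) \<and>
       (\<forall>k<n. \<forall>l<n. mtrace (H k * H l) = (if k = l then 1 else 0)) \<and>
       rho = msum (dA * dB) (dA * dB) (\<lambda>k. complex_of_real (lam k) \<cdot>\<^sub>m kron (G k) (H k)) {..<n})"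

end

theory Submission
  imports Defs "Jordan_Normal_Form.DL_Rank_Submatrix"
begin

text \<open>A rank-one, coherent, degree-1 design \<open>P\<^sub>1, \<dots>, P\<^sub>N\<close> in dimension \<open>b\<close> has Gram matrix
  \<open>tr (P\<^sub>k P\<^sub>l) = (1 - \<mu>) I + \<mu> J\<close>, and coherence forces \<open>1 + (N - 1) \<mu> = N / b\<close>: the Gram
  matrix has eigenvalue \<open>N / b\<close> on the all-ones vector and \<open>1 - \<mu>\<close> on its complement.
  One Householder reflection \<open>W\<close> exchanging \<open>e\<^sub>0\<close> with the normalised all-ones vector
  diagonalises the Gram matrices of both designs at once, so
  \<open>G\<^sub>j = \<gamma>\<^sub>j\<^sup>-\<^sup>1\<^sup>/\<^sup>2 \<Sum>\<^sub>k W\<^sub>k\<^sub>j P\<^sup>A\<^sub>k\<close> and the analogous \<open>H\<^sub>j\<close> are orthonormal and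
  \<open>\<rho> = \<Sum>\<^sub>j (\<gamma>\<^sup>A\<^sub>j \<gamma>\<^sup>B\<^sub>j)\<^sup>1\<^sup>/\<^sup>2 / N \<cdot> G\<^sub>j \<otimes> H\<^sub>j\<close>.

  Conversely, pairing an arbitrary decomposition \<open>\<Sum>\<^sub>m \<lambda>\<^sub>m G\<^sub>m \<otimes> H\<^sub>m\<close> with
  \<open>P\<^sup>A\<^sub>j \<otimes> H\<^sub>m\<close>, \<open>G\<^sub>m \<otimes> P\<^sup>B\<^sub>j\<close> and \<open>G\<^sub>l \<otimes> H\<^sub>m\<close> shows that the coordinates
  \<open>x\<^sub>m = (tr (P\<^sup>A\<^sub>k G\<^sub>m))\<^sub>k\<close> satisfy \<open>N\<^sup>2 \<lambda>\<^sub>m\<^sup>2 x\<^sub>m = \<Gamma>\<^sup>A \<Gamma>\<^sup>B x\<^sub>m\<close>. Hence every \<open>\<lambda>\<^sub>m\<close>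
  is \<open>\<alpha>\<close>, \<open>\<beta>\<close> or \<open>0\<close>, the value \<open>\<alpha>\<close> (belonging to the all-ones direction) occurs at most
  once, and \<open>tr \<rho>\<^sup>2 = \<Sum>\<^sub>m \<lambda>\<^sub>m\<^sup>2\<close> fixes the multiplicities.\<close>

section \<open>Traces of Kronecker products\<close>

lemma sum_lessThan_mult:
  fixes f :: "nat \<Rightarrow> 'a::comm_monoid_add"
  shows "(\<Sum>i<a * b. f i) = (\<Sum>p<a. \<Sum>q<b. f (p * b + q))"
proof -
  have "(\<Sum>q<b. f (p * b + q)) = sum f {p * b..<p * b + b}" for p
    using sum.shift_bounds_nat_ivl[of f 0 "p * b" b]
    by (simp add: atLeast0LessThan add.commute)
  then show ?thesis
    using sum.nat_group[of f b a] by (simp add: mult.commute)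
qed

lemma dim_row_mat_adjoint [simp]: "dim_row (mat_adjoint A) = dim_col A"
  and dim_col_mat_adjoint [simp]: "dim_col (mat_adjoint A) = dim_row A"
  unfolding mat_adjoint_def by auto

lemma index_mat_adjoint:
  "i < dim_col A \<Longrightarrow> j < dim_row A \<Longrightarrow> mat_adjoint A $$ (i, j) = cnj (A $$ (j, i))"
  unfolding mat_adjoint_def by (simp add: mat_of_rows_index)

lemma hermitian_mat_index:
  assumes "hermitian_mat b X" "i < b" "j < b"
  shows "X $$ (i, j) = cnj (X $$ (j, i))"
  using assms index_mat_adjoint[of i X j] unfolding hermitian_mat_def by auto

lemma mtrace_mult:
  assumes "A \<in> carrier_mat n m" "B \<in> carrier_mat m n"
  shows "mtrace (A * B) = (\<Sum>i<n. \<Sum>k<m. A $$ (i, k) * B $$ (k, i))"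
  using assms unfolding mtrace_def
  by (auto simp: scalar_prod_def atLeast0LessThan intro!: sum.cong)

lemma mtrace_mult_comm:
  assumes "A \<in> carrier_mat n m" "B \<in> carrier_mat m n"
  shows "mtrace (A * B) = mtrace (B * A)"
  unfolding mtrace_mult[OF assms] mtrace_mult[OF assms(2,1)]
  by (subst sum.swap) (simp add: mult.commute)

lemma mtrace_smult_mult:
  assumes "A \<in> carrier_mat n m" "B \<in> carrier_mat m n"
  shows "mtrace ((c \<cdot>\<^sub>m A) * B) = c * mtrace (A * B)"
  using assms by (simp add: mtrace_mult[of _ n m] sum_distrib_left mult.assoc)

lemma mtrace_mult_smult:
  assumes "A \<in> carrier_mat n m" "B \<in> carrier_mat m n"
  shows "mtrace (A * (c \<cdot>\<^sub>m B)) = c * mtrace (A * B)"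
  using assms by (simp add: mtrace_mult[of _ n m] sum_distrib_left algebra_simps)

lemma dim_row_kron [simp]: "dim_row (kron A B) = dim_row A * dim_row B"
  and dim_col_kron [simp]: "dim_col (kron A B) = dim_col A * dim_col B"
  unfolding kron_def by simp_all

lemma index_kron:
  "i < dim_row A * dim_row B \<Longrightarrow> j < dim_col A * dim_col B \<Longrightarrow>
   kron A B $$ (i, j) = A $$ (i div dim_row B, j div dim_col B) * B $$ (i mod dim_row B, j mod dim_col B)"
  unfolding kron_def by simp

lemma kron_carrier_mat:
  "A \<in> carrier_mat a a \<Longrightarrow> B \<in> carrier_mat b b \<Longrightarrow> kron A B \<in> carrier_mat (a * b) (a * b)"
  by auto

lemma mtrace_kron_mult:
  assumes "A \<in> carrier_mat a a" "X \<in> carrier_mat a a" "B \<in> carrier_mat b b" "Y \<in> carrier_mat b b"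
  shows "mtrace (kron A B * kron X Y) = mtrace (A * X) * mtrace (B * Y)"
proof -
  have index_lt: "p * b + q < a * b" if "p < a" "q < b" for p q
  proof -
    have "p * b + q < (p + 1) * b" using that by simp
    also have "\<dots> \<le> a * b" using that by (intro mult_right_mono) auto
    finally show ?thesis .
  qed
  have "mtrace (kron A B * kron X Y) = (\<Sum>i<a * b. \<Sum>k<a * b. kron A B $$ (i, k) * kron X Y $$ (k, i))"
    using assms by (intro mtrace_mult) (auto intro: kron_carrier_mat)
  also have "\<dots> = (\<Sum>p<a. \<Sum>q<b. \<Sum>p'<a. \<Sum>q'<b. (A $$ (p, p') * X $$ (p', p)) * (B $$ (q, q') * Y $$ (q', q)))"
    unfolding sum_lessThan_mult using assms index_lt
    by (intro sum.cong refl) (auto simp: index_kron algebra_simps)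
  also have "\<dots> = (\<Sum>p<a. \<Sum>p'<a. A $$ (p, p') * X $$ (p', p)) * (\<Sum>q<b. \<Sum>q'<b. B $$ (q, q') * Y $$ (q', q))"
    by (simp add: sum_product sum_distrib_left sum_distrib_right sum.swap[of _ "{..<b}" "{..<a}"])
  also have "\<dots> = mtrace (A * X) * mtrace (B * Y)"
    using assms by (simp add: mtrace_mult)
  finally show ?thesis .
qed

lemma dim_row_msum [simp]: "dim_row (msum n m f K) = n"
  and dim_col_msum [simp]: "dim_col (msum n m f K) = m"
  and msum_carrier_mat [simp]: "msum n m f K \<in> carrier_mat n m"
  unfolding msum_def by simp_all

lemma index_msum [simp]: "i < n \<Longrightarrow> j < m \<Longrightarrow> msum n m f K $$ (i, j) = (\<Sum>k\<in>K. f k $$ (i, j))"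
  unfolding msum_def by simp

lemma smult_msum:
  assumes "\<And>k. k \<in> K \<Longrightarrow> f k \<in> carrier_mat n m"
  shows "c \<cdot>\<^sub>m msum n m f K = msum n m (\<lambda>k. c \<cdot>\<^sub>m f k) K"
proof (rule eq_matI)
  fix i j assume "i < dim_row (msum n m (\<lambda>k. c \<cdot>\<^sub>m f k) K)" "j < dim_col (msum n m (\<lambda>k. c \<cdot>\<^sub>m f k) K)"
  with assms show "(c \<cdot>\<^sub>m msum n m f K) $$ (i, j) = msum n m (\<lambda>k. c \<cdot>\<^sub>m f k) K $$ (i, j)"
    by (auto simp: sum_distrib_left intro!: sum.cong) (metis carrier_matD index_smult_mat(1))
qed auto

lemma mtrace_msum_mult:
  assumes "finite K" "\<And>k. k \<in> K \<Longrightarrow> f k \<in> carrier_mat n n" "M \<in> carrier_mat n n"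
  shows "mtrace (msum n n f K * M) = (\<Sum>k\<in>K. mtrace (f k * M))"
proof -
  have "mtrace (msum n n f K * M) = (\<Sum>i<n. \<Sum>j<n. \<Sum>k\<in>K. f k $$ (i, j) * M $$ (j, i))"
    using assms by (simp add: mtrace_mult[of _ n n] sum_distrib_right)
  also have "\<dots> = (\<Sum>k\<in>K. \<Sum>i<n. \<Sum>j<n. f k $$ (i, j) * M $$ (j, i))"
    by (simp add: sum.swap[of _ K])
  also have "\<dots> = (\<Sum>k\<in>K. mtrace (f k * M))"
    using assms by (intro sum.cong refl) (simp add: mtrace_mult[of _ n n])
  finally show ?thesis .
qed

lemma mtrace_mult_msum:
  assumes "finite K" "\<And>k. k \<in> K \<Longrightarrow> f k \<in> carrier_mat n n" "M \<in> carrier_mat n n"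
  shows "mtrace (M * msum n n f K) = (\<Sum>k\<in>K. mtrace (M * f k))"
  using assms by (simp add: mtrace_mult_comm[of M n n] mtrace_msum_mult cong: sum.cong)

lemma mtrace_kron_msum_mult:
  assumes "finite K" "\<And>k. k \<in> K \<Longrightarrow> A k \<in> carrier_mat a a" "\<And>k. k \<in> K \<Longrightarrow> B k \<in> carrier_mat b b"
    "X \<in> carrier_mat a a" "Y \<in> carrier_mat b b"
  shows "mtrace (msum (a * b) (a * b) (\<lambda>k. c k \<cdot>\<^sub>m kron (A k) (B k)) K * kron X Y)
       = (\<Sum>k\<in>K. c k * mtrace (A k * X) * mtrace (B k * Y))"
proof -
  have "mtrace (msum (a * b) (a * b) (\<lambda>k. c k \<cdot>\<^sub>m kron (A k) (B k)) K * kron X Y)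
      = (\<Sum>k\<in>K. c k * mtrace (kron (A k) (B k) * kron X Y))"
    using assms by (simp add: mtrace_msum_mult kron_carrier_mat mtrace_smult_mult[of _ "a * b" "a * b"])
  also have "\<dots> = (\<Sum>k\<in>K. c k * mtrace (A k * X) * mtrace (B k * Y))"
    using assms mtrace_kron_mult by (intro sum.cong refl) (metis mult.assoc)
  finally show ?thesis .
qed

lemma mtrace_mult_kron_msum:
  assumes "finite K" "\<And>k. k \<in> K \<Longrightarrow> A k \<in> carrier_mat a a" "\<And>k. k \<in> K \<Longrightarrow> B k \<in> carrier_mat b b"
    "M \<in> carrier_mat (a * b) (a * b)"
  shows "mtrace (M * msum (a * b) (a * b) (\<lambda>k. c k \<cdot>\<^sub>m kron (A k) (B k)) K)
       = (\<Sum>k\<in>K. c k * mtrace (M * kron (A k) (B k)))"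
  using assms
  by (simp add: mtrace_mult_msum kron_carrier_mat mtrace_mult_smult[of _ "a * b" "a * b"] cong: sum.cong)

section \<open>Rank-one projections\<close>

lemma det_2x2:
  assumes "A \<in> carrier_mat 2 2"
  shows "det A = A $$ (0, 0) * A $$ (1, 1) - A $$ (0, 1) * A $$ (1, 0)"
proof -
  have minor: "mat_delete A i 0 \<in> carrier_mat 1 1" for i
    using mat_delete_carrier[OF assms] by simp
  have "det A = A $$ (0, 0) * cofactor A 0 0 + A $$ (1, 0) * cofactor A 1 0"
    using laplace_expansion_column[OF assms, of 0] by (simp add: numeral_2_eq_2)
  moreover have "cofactor A 0 0 = mat_delete A 0 0 $$ (0, 0)" "cofactor A 1 0 = - mat_delete A 1 0 $$ (0, 0)"
    unfolding cofactor_def using det_single[OF minor] by simp_all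
  ultimately have "det A = A $$ (0, 0) * mat_delete A 0 0 $$ (0, 0) - A $$ (1, 0) * mat_delete A 1 0 $$ (0, 0)"
    by simp
  moreover have "mat_delete A 0 0 $$ (0, 0) = A $$ (1, 1)" "mat_delete A 1 0 $$ (0, 0) = A $$ (0, 1)"
    using assms unfolding mat_delete_def by auto
  ultimately show ?thesis by (simp add: algebra_simps)
qed

lemma pick_doubleton:
  assumes "i < j"
  shows "pick {i, j} 0 = i" "pick {i, j} (Suc 0) = j"
proof -
  show i: "pick {i, j} 0 = i"
    unfolding pick.simps using assms by (intro Least_equality) auto
  show "pick {i, j} (Suc 0) = j"
    using assms by (simp add: i del: pick.simps(1)) (intro Least_equality, auto)
qed

lemma minor_nonzero_imp_rank_ge_2:
  fixes A :: "'a::field mat"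
  assumes A: "A \<in> carrier_mat n n" and rows: "i < j" "j < n" and cols: "a < c" "c < n"
    and minor: "A $$ (i, a) * A $$ (j, c) - A $$ (i, c) * A $$ (j, a) \<noteq> 0"
  shows "2 \<le> vec_space.rank n A"
proof -
  define S where "S = submatrix A {i, j} {a, c}"
  have restrict: "{x. x < n \<and> x \<in> {i, j}} = {i, j}" "{x. x < n \<and> x \<in> {a, c}} = {a, c}"
    using rows cols by auto
  have card: "card {i, j} = 2" "card {a, c} = 2" using rows cols by auto
  have dims: "dim_row A = n" "dim_col A = n" using A by auto
  have S: "S \<in> carrier_mat 2 2"
    using card unfolding S_def carrier_mat_def mem_Collect_eq dim_submatrix dims by (simp only: restrict)
  have entry: "S $$ (p, q) = A $$ (pick {i, j} p, pick {a, c} q)" if "p < 2" "q < 2" for p q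
    using that card unfolding S_def submatrix_def dims by (simp only: restrict index_mat split)
  have "det S = A $$ (i, a) * A $$ (j, c) - A $$ (i, c) * A $$ (j, a)"
    unfolding det_2x2[OF S] using entry[of 0 0] entry[of 1 1] entry[of 0 1] entry[of 1 0] rows cols
    by (simp del: pick.simps add: pick_doubleton)
  with minor have "det S \<noteq> 0" by simp
  from vec_space.rank_gt_minor[OF A this[unfolded S_def]] show ?thesis
    using card by (simp only: restrict)
qed

lemma rank_le_1_minor_eq:
  fixes A :: "'a::field mat"
  assumes A: "A \<in> carrier_mat n n" and rank: "vec_space.rank n A < 2"
    and "i < n" "j < n" "a < n" "c < n"
  shows "A $$ (i, a) * A $$ (j, c) = A $$ (i, c) * A $$ (j, a)"
proof -
  have ordered: "A $$ (i, a) * A $$ (j, c) = A $$ (i, c) * A $$ (j, a)"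
    if "i < j" "j < n" "a < c" "c < n" for i j a c
    using minor_nonzero_imp_rank_ge_2[OF A that] rank by (metis eq_iff_diff_eq_0 not_le)
  show ?thesis
  proof (cases "i = j \<or> a = c")
    case True then show ?thesis by (auto simp: mult.commute)
  next
    case False
    then have "i < j \<or> j < i" "a < c \<or> c < a" by auto
    then show ?thesis
    proof (elim disjE)
      assume "i < j" "a < c" then show ?thesis using ordered[of i j a c] assms by simp
    next
      assume "j < i" "a < c" then show ?thesis using ordered[of j i a c] assms by (simp add: mult.commute)
    next
      assume "i < j" "c < a" then show ?thesis using ordered[of i j c a] assms by (simp add: mult.commute)
    next
      assume "j < i" "c < a" then show ?thesis using ordered[of j i c a] assms by (simp add: mult.commute)
    qed
  qed
qed

lemma orth_proj_rank_1_mtrace: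
  assumes P: "orth_proj b P" and rank: "vec_space.rank b P = 1"
  shows "mtrace P = 1"
proof -
  have Pc: "P \<in> carrier_mat b b" and idem: "P * P = P" using P unfolding orth_proj_def by auto
  have "\<exists>i<b. \<exists>a<b. P $$ (i, a) \<noteq> 0"
  proof (rule ccontr)
    assume "\<not> ?thesis"
    with Pc have "P = 0\<^sub>m b b" by (intro eq_matI) auto
    with rank show False using vec_space.rank_0I by (metis zero_neq_one)
  qed
  then obtain i a where ia: "i < b" "a < b" "P $$ (i, a) \<noteq> 0" by blast
  have minor: "P $$ (i, a) * P $$ (k, k) = P $$ (i, k) * P $$ (k, a)" if "k < b" for k
    using rank_le_1_minor_eq[OF Pc _ ia(1) that ia(2) that] rank by simp
  have "mtrace P * P $$ (i, a) = (\<Sum>k<b. P $$ (i, k) * P $$ (k, a))"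
    using Pc minor unfolding mtrace_def by (simp add: sum_distrib_right) (simp add: mult.commute)
  also have "\<dots> = (P * P) $$ (i, a)" using Pc ia by (simp add: scalar_prod_def atLeast0LessThan)
  finally show ?thesis using idem ia(3) by simp
qed

text \<open>With \<open>M = P Q\<close>, idempotency gives \<open>tr (P Q) = tr (M M\<^sup>*) = \<Sum>\<bar>M\<^sub>i\<^sub>k\<bar>\<^sup>2\<close>.\<close>

lemma orth_proj_mtrace_mult_nonneg:
  assumes P: "orth_proj b P" and Q: "orth_proj b Q"
  obtains r where "r \<ge> 0" "mtrace (P * Q) = of_real r"
proof -
  have Pc: "P \<in> carrier_mat b b" and PP: "P * P = P" and Ph: "hermitian_mat b P"
    using P unfolding orth_proj_def hermitian_mat_def by auto
  have Qc: "Q \<in> carrier_mat b b" and QQ: "Q * Q = Q" and Qh: "hermitian_mat b Q"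
    using Q unfolding orth_proj_def hermitian_mat_def by auto
  define M where "M = P * Q"
  have Mc: "M \<in> carrier_mat b b" using Pc Qc M_def by simp
  have "P * Q = P * (M * Q)"
    using Pc Qc PP QQ by (simp add: M_def assoc_mult_mat[of P b b Q b Q b] assoc_mult_mat[of P b b P b Q b, symmetric])
  also have "mtrace \<dots> = mtrace (M * Q * P)"
    using Pc Qc Mc by (intro mtrace_mult_comm[of _ b b]) auto
  also have "M * Q * P = M * (Q * P)"
    using Pc Qc Mc by (intro assoc_mult_mat[of _ b b]) auto
  also have "mtrace \<dots> = (\<Sum>i<b. \<Sum>k<b. M $$ (i, k) * (Q * P) $$ (k, i))"
    using Mc Pc Qc by (intro mtrace_mult) auto
  also have "\<dots> = (\<Sum>i<b. \<Sum>k<b. of_real ((cmod (M $$ (i, k)))\<^sup>2))"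
  proof (intro sum.cong refl)
    fix i k assume ik: "i \<in> {..<b}" "k \<in> {..<b}"
    have "(Q * P) $$ (k, i) = (\<Sum>l<b. Q $$ (k, l) * P $$ (l, i))"
      using ik Pc Qc by (simp add: scalar_prod_def atLeast0LessThan)
    also have "\<dots> = (\<Sum>l<b. cnj (P $$ (i, l) * Q $$ (l, k)))"
      using ik hermitian_mat_index[OF Qh, of k] hermitian_mat_index[OF Ph, of _ i]
      by (intro sum.cong refl) (simp add: mult.commute)
    also have "\<dots> = cnj (M $$ (i, k))"
      using ik Pc Qc by (simp add: M_def scalar_prod_def atLeast0LessThan)
    finally show "M $$ (i, k) * (Q * P) $$ (k, i) = of_real ((cmod (M $$ (i, k)))\<^sup>2)"
      using complex_norm_square[of "M $$ (i, k)"] by simp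
  qed
  finally show ?thesis
    using that[of "\<Sum>i<b. \<Sum>k<b. (cmod (M $$ (i, k)))\<^sup>2"] by (simp add: M_def sum_nonneg)
qed

section \<open>Gram matrices of rank-one designs\<close>

lemma coherent_rank_1_mtrace_sum:
  assumes design: "quantum_design b N P" and rank: "regular_r1 b N P" and coh: "coherent b N P"
    and b: "1 \<le> b" and X: "X \<in> carrier_mat b b"
  shows "(\<Sum>k<N. mtrace (P k * X)) = of_real (real N / real b) * mtrace X"
proof -
  have Pc: "P k \<in> carrier_mat b b" if "k < N" for k
    using design that unfolding quantum_design_def orth_proj_def by auto
  obtain c where c: "msum b b P {..<N} = c \<cdot>\<^sub>m 1\<^sub>m b" using coh unfolding coherent_def by auto
  have sum_eq: "(\<Sum>k<N. mtrace (P k * Y)) = c * mtrace Y" if Y: "Y \<in> carrier_mat b b" for Y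
  proof -
    have "(\<Sum>k<N. mtrace (P k * Y)) = mtrace (msum b b P {..<N} * Y)"
      using Pc Y by (intro mtrace_msum_mult[symmetric]) auto
    also have "\<dots> = c * mtrace Y" unfolding c using Y by (simp add: mtrace_smult_mult[of _ b b])
    finally show ?thesis .
  qed
  have "mtrace (P k * 1\<^sub>m b) = 1" if "k < N" for k
    using Pc[OF that] orth_proj_rank_1_mtrace[of b "P k"] design rank that
    unfolding quantum_design_def regular_r1_def by simp
  then have "(\<Sum>k<N. mtrace (P k * 1\<^sub>m b)) = of_nat N" by simp
  moreover have "mtrace (1\<^sub>m b :: complex mat) = of_nat b" unfolding mtrace_def by simp
  ultimately have "c = of_real (real N / real b)"
    using sum_eq[of "1\<^sub>m b"] b by (simp add: field_simps)
  with sum_eq X show ?thesis by simp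
qed

locale design_gram =
  fixes b N :: nat and P :: "nat \<Rightarrow> complex mat" and mu :: real
  assumes dim_pos: "1 \<le> b" and size_pos: "1 \<le> N"
    and hermitian: "\<And>k. k < N \<Longrightarrow> hermitian_mat b (P k)"
    and gram: "\<And>k l. k < N \<Longrightarrow> l < N \<Longrightarrow> mtrace (P k * P l) = (if k = l then 1 else of_real mu)"
    and frame_eq: "1 + (real N - 1) * mu = real N / real b"
    and overlap_nonneg: "2 \<le> N \<Longrightarrow> 0 \<le> mu"
    and overlap_less_1: "2 \<le> N \<Longrightarrow> mu < 1"
begin

lemma carrier: "k < N \<Longrightarrow> P k \<in> carrier_mat b b"
  using hermitian unfolding hermitian_mat_def by blast

lemma frame_complement: "(real N - 1) * (1 - mu) = real N * (real b - 1) / real b"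
proof -
  have "(real N - 1) * (1 - mu) = real N - real N / real b" using frame_eq by (simp add: algebra_simps)
  then show ?thesis using dim_pos by (simp add: field_simps)
qed

end

lemma rank_1_design_frame_eq:
  assumes design: "quantum_design b N P" and rank: "regular_r1 b N P" and coh: "coherent b N P"
    and b: "1 \<le> b" and N: "1 \<le> N"
    and gram: "\<And>k l. k < N \<Longrightarrow> l < N \<Longrightarrow> mtrace (P k * P l) = (if k = l then 1 else of_real mu)"
  shows "1 + (real N - 1) * mu = real N / real b"
proof -
  have P0: "P 0 \<in> carrier_mat b b" "P 0 * P 0 = P 0"
    using design N unfolding quantum_design_def orth_proj_def by auto
  then have "(\<Sum>k<N. mtrace (P k * P 0)) = of_real (real N / real b)"
    using coherent_rank_1_mtrace_sum[OF design rank coh b] N gram[of 0 0] by simp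
  moreover have "(\<Sum>k<N. mtrace (P k * P 0)) = 1 + (\<Sum>k\<in>{..<N} - {0}. of_real mu)"
    using N gram by (simp add: sum.remove[of _ 0])
  ultimately have "(of_real (1 + (real N - 1) * mu) :: complex) = of_real (real N / real b)"
    using N by (simp add: of_nat_diff)
  then show ?thesis by (simp only: of_real_eq_iff)
qed

lemma frame_eq_imp_overlap_less_1:
  assumes frame: "1 + (real N - 1) * mu = real N / real b" and "2 \<le> b" "2 \<le> N"
  shows "mu < 1"
proof -
  have "(real N - 1) * (1 - mu) = real N - real N / real b"
    using frame by (simp add: algebra_simps)
  also have "\<dots> = real N * (real b - 1) / real b"
    using assms by (simp add: field_simps)
  also have "\<dots> > 0"
    using assms by simp
  finally show ?thesis using assms by (simp add: zero_less_mult_iff)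
qed

lemma quantum_design_gram:
  assumes design: "quantum_design b N P" and rank: "regular_r1 b N P"
    and coh: "coherent b N P" and deg: "degree1 N P"
    and b: "1 \<le> b" and N: "1 \<le> N" "N \<le> b\<^sup>2"
  obtains mu where "design_gram b N P mu"
proof -
  obtain mu where mu: "\<And>k l. k < N \<Longrightarrow> l < N \<Longrightarrow> k \<noteq> l \<Longrightarrow> mtrace (P k * P l) = of_real mu"
    using deg unfolding degree1_def by blast
  have proj: "orth_proj b (P k)" if "k < N" for k using design that unfolding quantum_design_def by blast
  have gram: "mtrace (P k * P l) = (if k = l then 1 else of_real mu)" if "k < N" "l < N" for k l
    using mu[OF that] proj[OF that(1)] orth_proj_rank_1_mtrace[OF proj] rank that
    unfolding orth_proj_def regular_r1_def by auto
  note frame = rank_1_design_frame_eq[OF design rank coh b N(1) gram]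
  show thesis
  proof (rule that, unfold_locales)
    show "hermitian_mat b (P k)" if "k < N" for k
      using proj[OF that] unfolding orth_proj_def hermitian_mat_def by blast
    assume N2: "2 \<le> N"
    obtain r where "r \<ge> 0" "mtrace (P 0 * P 1) = of_real r"
      using orth_proj_mtrace_mult_nonneg[OF proj proj, of 0 1] N2 by auto
    then show "0 \<le> mu" using gram[of 0 1] N2 by simp
    have "b \<noteq> 1" using N(2) N2 by auto
    with b N2 show "mu < 1" by (intro frame_eq_imp_overlap_less_1[OF frame]) auto
  qed (use b N gram frame in auto)
qed

section \<open>A common eigenbasis of the Gram matrices\<close>

text \<open>The Householder reflection exchanging \<open>e\<^sub>0\<close> and the normalised all-ones vector, as a
  symmetric orthogonal \<open>N \<times> N\<close> matrix; it diagonalises every Gram matrix \<open>(1 - \<mu>) I + \<mu> J\<close>.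
  For \<open>N = 1\<close> the division by \<open>1 - 1/\<surd>N = 0\<close> makes it the identity.\<close>

definition householder_vec :: "nat \<Rightarrow> nat \<Rightarrow> real" where
  "householder_vec N k = (if k = 0 then 1 else 0) - 1 / sqrt (real N)"

definition householder :: "nat \<Rightarrow> nat \<Rightarrow> nat \<Rightarrow> real" where
  "householder N k j =
     (if k = j then 1 else 0) - householder_vec N k * householder_vec N j / (1 - 1 / sqrt (real N))"

lemma householder_sym: "householder N k j = householder N j k"
  unfolding householder_def by (simp add: mult.commute)

lemma householder_vec_sum: "1 \<le> N \<Longrightarrow> (\<Sum>k<N. householder_vec N k) = 1 - sqrt (real N)"
  unfolding householder_vec_def by (simp add: sum_subtractf sum.delta real_div_sqrt)

lemma householder_vec_norm:
  assumes "1 \<le> N"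
  shows "(\<Sum>k<N. householder_vec N k * householder_vec N k) = 2 * (1 - 1 / sqrt (real N))"
proof -
  define s where "s = 1 / sqrt (real N)"
  have "(\<Sum>k<N. householder_vec N k * householder_vec N k) = (\<Sum>k<N. (if k = 0 then 1 - 2 * s else 0) + s * s)"
    unfolding householder_vec_def s_def by (intro sum.cong refl) (auto simp: algebra_simps)
  also have "\<dots> = 1 - 2 * s + real N * (s * s)" using assms by (simp add: sum.distrib)
  also have "real N * (s * s) = 1" unfolding s_def using assms by (simp add: field_simps)
  finally show ?thesis unfolding s_def by simp
qed

lemma householder_col_sum:
  assumes N: "1 \<le> N" and j: "j < N"
  shows "(\<Sum>k<N. householder N k j) = (if j = 0 then sqrt (real N) else 0)"
proof (cases "N = 1")
  case True then show ?thesis using j unfolding householder_def householder_vec_def by simp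
next
  case False
  define s where "s = 1 / sqrt (real N)"
  have "sqrt (real N) > 1" using N False by (simp add: real_less_rsqrt)
  then have s: "1 - s > 0" unfolding s_def by (simp add: field_simps)
  have Ns: "real N * s = sqrt (real N)" unfolding s_def using N by (simp add: real_div_sqrt)
  have Nss: "real N * s * s = 1" unfolding s_def using N by (simp add: field_simps)
  have "(\<Sum>k<N. householder N k j) = 1 - (1 - sqrt (real N)) * householder_vec N j / (1 - s)"
    using j householder_vec_sum[OF N] unfolding householder_def s_def
    by (simp add: sum_subtractf sum_divide_distrib[symmetric] sum_distrib_right[symmetric])
  also have "\<dots> = (if j = 0 then sqrt (real N) else 0)"
  proof (cases "j = 0")
    case True
    then have "householder_vec N j = 1 - s" unfolding householder_vec_def s_def by simp
    then show ?thesis using True s by simp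
  next
    case False
    then have "householder_vec N j = - s" unfolding householder_vec_def s_def by simp
    then have "1 - (1 - sqrt (real N)) * householder_vec N j / (1 - s) = 1 + (1 - sqrt (real N)) * s / (1 - s)"
      by simp
    also have "\<dots> = (1 - s + s - real N * s * s) / (1 - s)"
      using s Ns by (simp add: field_simps)
    also have "\<dots> = 0" using Nss by simp
    also have "\<dots> = (if j = 0 then sqrt (real N) else 0)" using False by simp
    finally show ?thesis .
  qed
  finally show ?thesis .
qed

lemma householder_orthogonal:
  assumes N: "1 \<le> N" and "i < N" "j < N"
  shows "(\<Sum>k<N. householder N k i * householder N k j) = (if i = j then 1 else 0)"
proof (cases "N = 1")
  case True then show ?thesis using assms unfolding householder_def householder_vec_def by simp
next
  case False
  define v where "v = householder_vec N"
  define c where "c = 1 - 1 / sqrt (real N)"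
  define t where "t = 1 / c"
  have "sqrt (real N) > 1" using N False by (simp add: real_less_rsqrt)
  then have "c \<noteq> 0" unfolding c_def by simp
  then have t: "2 * c * t = 2" unfolding t_def by simp
  have W: "householder N k j = (if k = j then 1 else 0) - v k * v j * t" for k j
    unfolding householder_def v_def t_def c_def by simp
  have "(\<Sum>k<N. householder N k i * householder N k j) =
     (\<Sum>k<N. (if k = i then (if i = j then 1 else 0) else 0)
        - (if k = i then v j * v i * t else 0) - (if k = j then v i * v j * t else 0)
        + (v k * v k) * (v i * v j * t * t))"
    unfolding W by (intro sum.cong refl) (auto simp: algebra_simps)
  also have "\<dots> = (if i = j then 1 else 0) - v j * v i * t - v i * v j * t
      + (\<Sum>k<N. v k * v k) * (v i * v j * t * t)"
    using assms by (simp add: sum.distrib sum_subtractf sum_distrib_right)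
  also have "\<dots> = (if i = j then 1 else 0) - 2 * (v i * v j * t) + (2 * c * t) * (v i * v j * t)"
    unfolding v_def householder_vec_norm[OF N, folded c_def] by (simp add: algebra_simps)
  also have "\<dots> = (if i = j then 1 else 0)" unfolding t by simp
  finally show ?thesis .
qed

lemma sum_gram_bilinear:
  fixes u v :: "nat \<Rightarrow> real" and N :: nat
  shows "(\<Sum>k<N. \<Sum>l<N. u k * v l * (mu + (if k = l then 1 - mu else 0)))
    = mu * ((\<Sum>k<N. u k) * (\<Sum>l<N. v l)) + (1 - mu) * (\<Sum>k<N. u k * v k)"
proof -
  have "(\<Sum>k<N. \<Sum>l<N. u k * v l * (mu + (if k = l then 1 - mu else 0)))
     = (\<Sum>k<N. \<Sum>l<N. mu * (u k * v l) + (if l = k then (1 - mu) * (u k * v l) else 0))"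
    by (intro sum.cong refl) (auto simp: algebra_simps)
  also have "\<dots> = mu * (\<Sum>k<N. \<Sum>l<N. u k * v l) + (\<Sum>k<N. (1 - mu) * (u k * v k))"
    by (simp add: sum.distrib sum.delta sum_distrib_left)
  also have "(\<Sum>k<N. \<Sum>l<N. u k * v l) = (\<Sum>k<N. u k) * (\<Sum>l<N. v l)"
    by (rule sum_product[symmetric])
  finally show ?thesis by (simp add: sum_distrib_left)
qed

context design_gram
begin

definition gram_eigenvalue :: "nat \<Rightarrow> real" where
  "gram_eigenvalue j = (if j = 0 then real N / real b else 1 - mu)"

lemma gram_eigenvalue_pos: "j < N \<Longrightarrow> 0 < gram_eigenvalue j"
  using dim_pos size_pos overlap_less_1 unfolding gram_eigenvalue_def by auto

definition schmidt_coeff :: "nat \<Rightarrow> nat \<Rightarrow> real" where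
  "schmidt_coeff j k = householder N k j / sqrt (gram_eigenvalue j)"

definition schmidt_op :: "nat \<Rightarrow> complex mat" where
  "schmidt_op j = msum b b (\<lambda>k. of_real (schmidt_coeff j k) \<cdot>\<^sub>m P k) {..<N}"

lemma schmidt_op_carrier: "schmidt_op j \<in> carrier_mat b b"
  unfolding schmidt_op_def by simp

lemma index_schmidt_op:
  "p < b \<Longrightarrow> q < b \<Longrightarrow> schmidt_op j $$ (p, q) = (\<Sum>k<N. of_real (schmidt_coeff j k) * P k $$ (p, q))"
  unfolding schmidt_op_def using carrier
  by (auto intro!: sum.cong) (metis carrier_matD index_smult_mat(1))

lemma schmidt_op_hermitian: "hermitian_mat b (schmidt_op j)"
  unfolding hermitian_mat_def
proof (intro conjI schmidt_op_carrier eq_matI)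
  fix p q assume "p < dim_row (schmidt_op j)" "q < dim_col (schmidt_op j)"
  then have pq: "p < b" "q < b" using schmidt_op_carrier[of j] by auto
  have "mat_adjoint (schmidt_op j) $$ (p, q) = cnj (\<Sum>k<N. of_real (schmidt_coeff j k) * P k $$ (q, p))"
    using pq schmidt_op_carrier[of j] by (simp add: index_mat_adjoint index_schmidt_op)
  also have "\<dots> = (\<Sum>k<N. of_real (schmidt_coeff j k) * P k $$ (p, q))"
    unfolding cnj_sum
  proof (intro sum.cong refl)
    fix k assume "k \<in> {..<N}"
    then have "P k $$ (p, q) = cnj (P k $$ (q, p))"
      using hermitian_mat_index[OF hermitian pq] by simp
    then show "cnj (of_real (schmidt_coeff j k) * P k $$ (q, p)) = of_real (schmidt_coeff j k) * P k $$ (p, q)"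
      by simp
  qed
  finally show "mat_adjoint (schmidt_op j) $$ (p, q) = schmidt_op j $$ (p, q)"
    using pq by (simp add: index_schmidt_op)
qed (use schmidt_op_carrier[of j] in auto)

lemma mtrace_schmidt_op_mult:
  "mtrace (schmidt_op i * schmidt_op j) =
     (\<Sum>k<N. \<Sum>l<N. of_real (schmidt_coeff i k * schmidt_coeff j l) * mtrace (P k * P l))"
proof -
  have "mtrace (schmidt_op i * schmidt_op j) = (\<Sum>k<N. mtrace ((of_real (schmidt_coeff i k) \<cdot>\<^sub>m P k) * schmidt_op j))"
    unfolding schmidt_op_def[of i] using carrier schmidt_op_carrier by (intro mtrace_msum_mult) auto
  also have "\<dots> = (\<Sum>k<N. of_real (schmidt_coeff i k) * mtrace (P k * schmidt_op j))"
    using carrier schmidt_op_carrier by (intro sum.cong refl mtrace_smult_mult[of _ b b]) auto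
  also have "\<dots> = (\<Sum>k<N. of_real (schmidt_coeff i k) * (\<Sum>l<N. of_real (schmidt_coeff j l) * mtrace (P k * P l)))"
  proof (intro sum.cong refl arg_cong[where f = "\<lambda>x. _ * x"])
    fix k assume "k \<in> {..<N}"
    then have "mtrace (P k * schmidt_op j) = (\<Sum>l<N. mtrace (P k * (of_real (schmidt_coeff j l) \<cdot>\<^sub>m P l)))"
      unfolding schmidt_op_def[of j] using carrier by (intro mtrace_mult_msum) auto
    also have "\<dots> = (\<Sum>l<N. of_real (schmidt_coeff j l) * mtrace (P k * P l))"
      using carrier \<open>k \<in> {..<N}\<close> by (intro sum.cong refl mtrace_mult_smult[of _ b b]) auto
    finally show "mtrace (P k * schmidt_op j) = (\<Sum>l<N. of_real (schmidt_coeff j l) * mtrace (P k * P l))" .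
  qed
  finally show ?thesis by (simp add: sum_distrib_left mult.assoc)
qed

lemma schmidt_coeff_sum:
  "j < N \<Longrightarrow> (\<Sum>k<N. schmidt_coeff j k) = (if j = 0 then sqrt (real N) else 0) / sqrt (gram_eigenvalue j)"
  unfolding schmidt_coeff_def using householder_col_sum[OF size_pos] by (simp add: sum_divide_distrib[symmetric])

lemma schmidt_coeff_orthogonal:
  "i < N \<Longrightarrow> j < N \<Longrightarrow> (\<Sum>k<N. schmidt_coeff i k * schmidt_coeff j k)
     = (if i = j then 1 else 0) / (sqrt (gram_eigenvalue i) * sqrt (gram_eigenvalue j))"
  unfolding schmidt_coeff_def using householder_orthogonal[OF size_pos]
  by (simp add: sum_divide_distrib[symmetric])

lemma schmidt_op_orthonormal:
  assumes i: "i < N" and j: "j < N"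
  shows "mtrace (schmidt_op i * schmidt_op j) = (if i = j then 1 else 0)"
proof -
  define u where "u = schmidt_coeff"
  have "mtrace (schmidt_op i * schmidt_op j) =
     (\<Sum>k<N. \<Sum>l<N. of_real (u i k * u j l) * (if k = l then 1 else of_real mu))"
    unfolding mtrace_schmidt_op_mult u_def using gram by (intro sum.cong refl) auto
  also have "\<dots> = of_real (\<Sum>k<N. \<Sum>l<N. u i k * u j l * (mu + (if k = l then 1 - mu else 0)))"
    by (simp add: if_distrib cong: if_cong)
  also have "(\<Sum>k<N. \<Sum>l<N. u i k * u j l * (mu + (if k = l then 1 - mu else 0)))
      = mu * ((\<Sum>k<N. u i k) * (\<Sum>l<N. u j l)) + (1 - mu) * (\<Sum>k<N. u i k * u j k)"
    by (rule sum_gram_bilinear)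
  also have "\<dots> = (if i = j then 1 else 0)"
  proof (cases "i = j \<and> i = 0")
    case True
    have "mu * real b + (1 - mu) * (real b / real N) = real b * (1 + (real N - 1) * mu) / real N"
      using size_pos by (simp add: field_simps)
    then show ?thesis
      using True frame_eq dim_pos size_pos unfolding u_def
      by (simp add: schmidt_coeff_sum schmidt_coeff_orthogonal gram_eigenvalue_def real_sqrt_divide)
  next
    case False
    then show ?thesis
      using i j gram_eigenvalue_pos[OF i] unfolding u_def
      by (auto simp: schmidt_coeff_sum schmidt_coeff_orthogonal gram_eigenvalue_def)
  qed
  finally show ?thesis by simp
qed

end

section \<open>Uniqueness of the Schmidt coefficients\<close>

lemma mset_map_two_values:
  fixes lam :: "nat \<Rightarrow> 'a"
  assumes "\<And>m. m < N \<Longrightarrow> lam m = \<alpha> \<or> lam m = \<beta>" and "\<alpha> \<noteq> \<beta>"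
    and card: "card {m \<in> {..<N}. lam m = \<alpha>} = 1"
  shows "mset (map lam [0..<N]) = {#\<alpha>#} + replicate_mset (N - 1) \<beta>"
proof (rule multiset_eqI)
  fix v
  have split: "{..<N} = {m \<in> {..<N}. lam m = \<alpha>} \<union> {m \<in> {..<N}. lam m = \<beta>}"
    using assms(1) by auto
  have "N = card ({m \<in> {..<N}. lam m = \<alpha>} \<union> {m \<in> {..<N}. lam m = \<beta>})"
    using split by (metis card_lessThan)
  also have "\<dots> = 1 + card {m \<in> {..<N}. lam m = \<beta>}"
    using card assms(2) by (subst card_Un_disjoint) auto
  finally have "card {m \<in> {..<N}. lam m = \<beta>} = N - 1" by simp
  moreover have "count (mset (map lam [0..<N])) v = card {m \<in> {..<N}. lam m = v}"
    unfolding count_mset count_list_eq_length_filter length_filter_conv_card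
    by (intro arg_cong[where f = card]) auto
  moreover have "{m \<in> {..<N}. lam m = v} = {}" if "v \<noteq> \<alpha>" "v \<noteq> \<beta>"
    using that assms(1) by auto
  ultimately show "count (mset (map lam [0..<N])) v = count ({#\<alpha>#} + replicate_mset (N - 1) \<beta>) v"
    using card assms(2) by auto
qed

lemma mset_from_sum_of_squares:
  fixes lam :: "nat \<Rightarrow> real"
  assumes lam_values: "\<And>m. m < N \<Longrightarrow> lam m = \<alpha> \<or> lam m = \<beta> \<or> lam m = 0"
    and alpha_once: "\<And>l m. l < N \<Longrightarrow> m < N \<Longrightarrow> lam l = \<alpha> \<Longrightarrow> lam m = \<alpha> \<Longrightarrow> l = m"
    and "\<beta> < \<alpha>" "0 < \<beta>"
    and squares: "(\<Sum>m<N. (lam m)\<^sup>2) = \<alpha>\<^sup>2 + (real N - 1) * \<beta>\<^sup>2"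
  shows "mset (map lam [0..<N]) = {#\<alpha>#} + replicate_mset (N - 1) \<beta>"
proof -
  define A where "A = {m \<in> {..<N}. lam m = \<alpha>}"
  define B where "B = {m \<in> {..<N}. lam m = \<beta>}"
  have fin: "finite A" "finite B" and disj: "A \<inter> B = {}" and sub: "A \<union> B \<subseteq> {..<N}"
    unfolding A_def B_def using \<open>\<beta> < \<alpha>\<close> by auto
  have card_AB: "card A + card B \<le> N"
    using card_Un_disjoint[OF fin disj] card_mono[OF _ sub] by simp
  have "(\<Sum>m<N. (lam m)\<^sup>2) = (\<Sum>m<N. (if lam m = \<alpha> then \<alpha>\<^sup>2 else 0) + (if lam m = \<beta> then \<beta>\<^sup>2 else 0))"
    using lam_values \<open>\<beta> < \<alpha>\<close> \<open>0 < \<beta>\<close> by (intro sum.cong refl) auto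
  also have "\<dots> = real (card A) * \<alpha>\<^sup>2 + real (card B) * \<beta>\<^sup>2"
    unfolding sum.distrib A_def B_def by (simp add: sum.inter_filter[symmetric])
  finally have eq: "real (card A) * \<alpha>\<^sup>2 + real (card B) * \<beta>\<^sup>2 = \<alpha>\<^sup>2 + (real N - 1) * \<beta>\<^sup>2"
    using squares by simp
  have "card A \<le> 1"
    using alpha_once unfolding A_def by (auto simp: card_le_Suc0_iff_eq)
  moreover have "card A \<noteq> 0"
  proof
    assume "card A = 0"
    with eq have "real (card B) * \<beta>\<^sup>2 = \<alpha>\<^sup>2 + (real N - 1) * \<beta>\<^sup>2" by simp
    also have "\<dots> > real N * \<beta>\<^sup>2"
      using power_strict_mono[OF \<open>\<beta> < \<alpha>\<close>] \<open>0 < \<beta>\<close> by (simp add: algebra_simps)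
    finally have "real (card B) > real N" using \<open>0 < \<beta>\<close> by simp
    with card_AB show False by linarith
  qed
  ultimately have card_A: "card A = 1" by simp
  with eq \<open>0 < \<beta>\<close> have "card B = N - 1" by simp
  with card_A have "A \<union> B = {..<N}"
    using card_Un_disjoint[OF fin disj] card_AB by (intro card_subset_eq[OF _ sub]) auto
  then have "lam m = \<alpha> \<or> lam m = \<beta>" if "m < N" for m
    using that unfolding A_def B_def by auto
  with card_A \<open>\<beta> < \<alpha>\<close> show ?thesis
    unfolding A_def by (intro mset_map_two_values) auto
qed

lemma sum_gram_row:
  fixes f :: "nat \<Rightarrow> complex" and N :: nat
  assumes "j < N"
  shows "(\<Sum>k<N. (if k = j then 1 else c) * f k) = (1 - c) * f j + c * (\<Sum>k<N. f k)"
proof -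
  have "(\<Sum>k<N. (if k = j then 1 else c) * f k) = (\<Sum>k<N. c * f k + (if k = j then (1 - c) * f k else 0))"
    by (intro sum.cong refl) (auto simp: algebra_simps)
  then show ?thesis using assms by (simp add: sum.distrib sum_distrib_left)
qed

lemma sum_delta_right:
  fixes N :: nat
  assumes "m < N"
  shows "(\<Sum>k<N. f k * (if k = m then 1 else 0)) = (f m :: complex)"
proof -
  have "(\<Sum>k<N. f k * (if k = m then 1 else 0)) = (\<Sum>k<N. if k = m then f k else 0)"
    by (intro sum.cong) auto
  then show ?thesis using assms by simp
qed

lemma eq_sqrt_div_if_square_eq:
  fixes x c :: real
  assumes "0 \<le> x" "0 < n" "(n * x)\<^sup>2 = c"
  shows "x = sqrt c / n"
proof -
  have "sqrt c = \<bar>n * x\<bar>" using assms(3) real_sqrt_abs by blast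
  then show ?thesis using assms by simp
qed

text \<open>The equations satisfied by an operator-Schmidt decomposition \<open>\<Sum>\<^sub>m \<lambda>\<^sub>m G\<^sub>m \<otimes> H\<^sub>m\<close> of
  \<open>\<rho> = N\<^sup>-\<^sup>1 \<Sum>\<^sub>k P\<^sub>k \<otimes> Q\<^sub>k\<close>, written in the coordinates \<open>x m k = tr (P\<^sub>k G\<^sub>m)\<close> and
  \<open>y m k = tr (Q\<^sub>k H\<^sub>m)\<close>; \<open>\<mu>\<^sub>A\<close>, \<open>\<mu>\<^sub>B\<close> are the off-diagonal Gram entries of the two designs.\<close>

locale schmidt_equations =
  fixes N :: nat and muA muB :: real and lam :: "nat \<Rightarrow> real" and x y :: "nat \<Rightarrow> nat \<Rightarrow> complex"
  assumes two_le_N: "2 \<le> N"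
    and lam_nonneg: "\<And>m. m < N \<Longrightarrow> 0 \<le> lam m"
    and muA: "0 \<le> muA" "muA < 1" and muB: "0 \<le> muB" "muB < 1"
    and mu_nonzero: "muA \<noteq> 0 \<or> muB \<noteq> 0"
    and eq_x: "\<And>m j. m < N \<Longrightarrow> j < N \<Longrightarrow>
      of_real (lam m) * x m j = (\<Sum>k<N. (if k = j then 1 else of_real muA) * y m k) / of_nat N"
    and eq_y: "\<And>m j. m < N \<Longrightarrow> j < N \<Longrightarrow>
      of_real (lam m) * y m j = (\<Sum>k<N. (if k = j then 1 else of_real muB) * x m k) / of_nat N"
    and eq_xy: "\<And>l m. l < N \<Longrightarrow> m < N \<Longrightarrow>
      (\<Sum>k<N. x l k * y m k) / of_nat N = (if l = m then of_real (lam m) else 0)"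
    and sum_squares: "(\<Sum>m<N. (lam m)\<^sup>2) = (1 + (real N - 1) * muA * muB) / real N"
begin

definition cA :: real where "cA = 1 + (real N - 1) * muA"
definition cB :: real where "cB = 1 + (real N - 1) * muB"
definition alpha :: real where "alpha = sqrt (cA * cB) / real N"
definition beta :: real where "beta = sqrt ((1 - muA) * (1 - muB)) / real N"
definition sum_x :: "nat \<Rightarrow> complex" where "sum_x m = (\<Sum>k<N. x m k)"
definition sum_y :: "nat \<Rightarrow> complex" where "sum_y m = (\<Sum>k<N. y m k)"

lemma N_pos: "0 < real N"
  using two_le_N by simp

lemma cA_pos: "0 < cA" and cB_pos: "0 < cB"
  unfolding cA_def cB_def using muA muB two_le_N by (simp_all add: add_pos_nonneg)

lemma x_eq: "m < N \<Longrightarrow> j < N \<Longrightarrow>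
    of_nat N * of_real (lam m) * x m j = of_real (1 - muA) * y m j + of_real muA * sum_y m"
  using eq_x[of m j] sum_gram_row[of j N "of_real muA" "y m"] N_pos
  unfolding sum_y_def by (simp add: field_simps)

lemma y_eq: "m < N \<Longrightarrow> j < N \<Longrightarrow>
    of_nat N * of_real (lam m) * y m j = of_real (1 - muB) * x m j + of_real muB * sum_x m"
  using eq_y[of m j] sum_gram_row[of j N "of_real muB" "x m"] N_pos
  unfolding sum_x_def by (simp add: field_simps)

lemma sum_x_eq: "m < N \<Longrightarrow> of_nat N * of_real (lam m) * sum_x m = of_real cA * sum_y m"
proof -
  assume m: "m < N"
  have "of_nat N * of_real (lam m) * sum_x m = (\<Sum>j<N. of_real (1 - muA) * y m j + of_real muA * sum_y m)"
    unfolding sum_x_def sum_distrib_left using x_eq[OF m] by simp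
  also have "\<dots> = of_real (1 - muA) * sum_y m + of_nat N * of_real muA * sum_y m"
    unfolding sum_y_def by (simp add: sum.distrib sum_distrib_left mult.assoc)
  also have "\<dots> = of_real cA * sum_y m"
    unfolding cA_def using two_le_N by (simp add: algebra_simps of_nat_diff)
  finally show ?thesis .
qed

lemma sum_y_eq: "m < N \<Longrightarrow> of_nat N * of_real (lam m) * sum_y m = of_real cB * sum_x m"
proof -
  assume m: "m < N"
  have "of_nat N * of_real (lam m) * sum_y m = (\<Sum>j<N. of_real (1 - muB) * x m j + of_real muB * sum_x m)"
    unfolding sum_y_def sum_distrib_left using y_eq[OF m] by simp
  also have "\<dots> = of_real (1 - muB) * sum_x m + of_nat N * of_real muB * sum_x m"
    unfolding sum_x_def by (simp add: sum.distrib sum_distrib_left mult.assoc)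
  also have "\<dots> = of_real cB * sum_x m"
    unfolding cB_def using two_le_N by (simp add: algebra_simps of_nat_diff)
  finally show ?thesis .
qed

lemma lam_eq_sqrt:
  assumes "m < N" "of_nat N * of_nat N * of_real (lam m) * of_real (lam m) = (of_real c :: complex)"
  shows "lam m = sqrt c / real N"
proof (rule eq_sqrt_div_if_square_eq)
  have "(of_real ((real N * lam m)\<^sup>2) :: complex) = of_real c"
    using assms(2) by (simp add: power2_eq_square algebra_simps)
  then show "(real N * lam m)\<^sup>2 = c" by (simp only: of_real_eq_iff)
qed (use assms lam_nonneg N_pos in auto)

lemma beta_pos: "0 < beta"
  unfolding beta_def using muA muB N_pos by simp

lemma beta_less_alpha: "beta < alpha"
proof -
  have "cA \<ge> 1 - muA" "cB \<ge> 1 - muB"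
    unfolding cA_def cB_def using two_le_N muA muB by (auto intro!: order.trans[OF _ mult_nonneg_nonneg])
  moreover have "cA > 1 - muA \<or> cB > 1 - muB"
    using mu_nonzero muA muB two_le_N unfolding cA_def cB_def by (auto simp: algebra_simps)
  ultimately have "(1 - muA) * (1 - muB) < cA * cB"
  proof (elim disjE)
    assume "1 - muA \<le> cA" "1 - muB \<le> cB" "1 - muA < cA"
    then have "(1 - muA) * (1 - muB) < cA * (1 - muB)" using muB by (intro mult_strict_right_mono) auto
    also have "\<dots> \<le> cA * cB" using \<open>1 - muB \<le> cB\<close> cA_pos by (intro mult_left_mono) auto
    finally show ?thesis .
  next
    assume "1 - muA \<le> cA" "1 - muB \<le> cB" "1 - muB < cB"
    then have "(1 - muA) * (1 - muB) < (1 - muA) * cB" using muA by (intro mult_strict_left_mono) auto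
    also have "\<dots> \<le> cA * cB" using \<open>1 - muA \<le> cA\<close> cB_pos by (intro mult_right_mono) auto
    finally show ?thesis .
  qed
  then show ?thesis
    unfolding alpha_def beta_def using N_pos by (simp add: divide_strict_right_mono)
qed

lemma lam_eq_alpha_if_sum_x_nonzero:
  assumes m: "m < N" and nz: "sum_x m \<noteq> 0"
  shows "lam m = alpha"
proof -
  have "of_nat N * of_nat N * of_real (lam m) * of_real (lam m) * sum_x m
      = of_nat N * of_real (lam m) * (of_nat N * of_real (lam m) * sum_x m)"
    by (simp add: algebra_simps)
  also have "\<dots> = of_real cA * (of_nat N * of_real (lam m) * sum_y m)"
    using sum_x_eq[OF m] by (simp add: algebra_simps)
  also have "\<dots> = of_real (cA * cB) * sum_x m"
    using sum_y_eq[OF m] by simp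
  finally have "of_nat N * of_nat N * of_real (lam m) * of_real (lam m) = (of_real (cA * cB) :: complex)"
    using nz by simp
  then show ?thesis unfolding alpha_def by (rule lam_eq_sqrt[OF m])
qed

lemma lam_eq_beta_if_sum_x_zero:
  assumes m: "m < N" and j: "j < N" and zero: "sum_x m = 0" and nz: "x m j \<noteq> 0"
  shows "lam m = beta"
proof -
  have "sum_y m = 0" using sum_x_eq[OF m] zero cA_pos by simp
  have "of_nat N * of_nat N * of_real (lam m) * of_real (lam m) * x m j
      = of_nat N * of_real (lam m) * (of_nat N * of_real (lam m) * x m j)"
    by (simp add: algebra_simps)
  also have "\<dots> = of_nat N * of_real (lam m) * (of_real (1 - muA) * y m j)"
    using x_eq[OF m j] \<open>sum_y m = 0\<close> by simp
  also have "\<dots> = of_real (1 - muA) * (of_nat N * of_real (lam m) * y m j)"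
    by (simp add: algebra_simps)
  also have "\<dots> = of_real ((1 - muA) * (1 - muB)) * x m j"
    using y_eq[OF m j] zero by simp
  finally have "of_nat N * of_nat N * of_real (lam m) * of_real (lam m) = (of_real ((1 - muA) * (1 - muB)) :: complex)"
    using nz by simp
  then show ?thesis unfolding beta_def by (rule lam_eq_sqrt[OF m])
qed

lemma lam_eq_zero_if_x_zero:
  assumes m: "m < N" and zero: "\<And>j. j < N \<Longrightarrow> x m j = 0"
  shows "lam m = 0"
  using eq_xy[OF m m] zero by simp

lemma lam_cases:
  assumes m: "m < N"
  shows "sum_x m \<noteq> 0 \<and> lam m = alpha \<or> sum_x m = 0 \<and> (lam m = beta \<or> lam m = 0)"
proof (cases "sum_x m = 0")
  case True
  then show ?thesis
    using lam_eq_beta_if_sum_x_zero[OF m _ True] lam_eq_zero_if_x_zero[OF m] by metis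
qed (simp add: lam_eq_alpha_if_sum_x_nonzero[OF m])

text \<open>For \<open>\<lambda>\<^sub>m = \<alpha>\<close> the two eigen-equations force \<open>y m\<close> to be a multiple of the all-ones
  vector, so it cannot be orthogonal to another \<open>x l\<close> with nonzero sum.\<close>

lemma y_const_if_lam_alpha:
  assumes m: "m < N" and alpha: "lam m = alpha" and j: "j < N"
  shows "y m j = sum_y m / of_nat N"
proof -
  define K where "K = of_real (1 - muB) * of_real muA * sum_y m + of_nat N * of_real (lam m) * of_real muB * sum_x m"
  define c :: complex where "c = of_nat N * of_nat N * of_real (lam m) * of_real (lam m) - of_real (1 - muA) * of_real (1 - muB)"
  have K: "c * y m i = K" if i: "i < N" for i
  proof -
    have "of_nat N * of_nat N * of_real (lam m) * of_real (lam m) * y m i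
        = of_nat N * of_real (lam m) * (of_nat N * of_real (lam m) * y m i)"
      by (simp add: algebra_simps)
    also have "\<dots> = of_real (1 - muB) * (of_nat N * of_real (lam m) * x m i)
        + of_nat N * of_real (lam m) * of_real muB * sum_x m"
      unfolding y_eq[OF m i] by (simp add: algebra_simps)
    also have "\<dots> = of_real (1 - muB) * (of_real (1 - muA) * y m i) + K"
      unfolding x_eq[OF m i] K_def by (simp add: algebra_simps)
    finally show ?thesis unfolding c_def by (simp add: algebra_simps)
  qed
  have "c \<noteq> 0"
  proof
    assume "c = 0"
    then have "of_nat N * of_nat N * of_real (lam m) * of_real (lam m) = (of_real ((1 - muA) * (1 - muB)) :: complex)"
      unfolding c_def by simp
    then have "lam m = beta" unfolding beta_def by (rule lam_eq_sqrt[OF m])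
    with alpha beta_less_alpha show False by simp
  qed
  then have "y m i = K / c" if "i < N" for i using K[OF that] by (simp add: field_simps)
  moreover from this have "sum_y m = of_nat N * (K / c)" unfolding sum_y_def by simp
  ultimately show ?thesis using j two_le_N by simp
qed

lemma alpha_once:
  assumes l: "l < N" and m: "m < N" and "lam l = alpha" "lam m = alpha"
  shows "l = m"
proof (rule ccontr)
  assume "l \<noteq> m"
  have alpha_pos: "0 < alpha" using beta_pos beta_less_alpha by simp
  have sums: "sum_x l \<noteq> 0" "sum_x m \<noteq> 0"
    using lam_cases[OF l] lam_cases[OF m] assms(3,4) alpha_pos beta_less_alpha by auto
  have "sum_y m \<noteq> 0" using sum_y_eq[OF m] sums(2) cB_pos by auto
  have "(0::complex) = (\<Sum>k<N. x l k * y m k) / of_nat N"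
    using eq_xy[OF l m] \<open>l \<noteq> m\<close> by simp
  also have "(\<Sum>k<N. x l k * y m k) = (\<Sum>k<N. x l k * (sum_y m / of_nat N))"
    using y_const_if_lam_alpha[OF m \<open>lam m = alpha\<close>] by (intro sum.cong) auto
  also have "\<dots> = sum_x l * (sum_y m / of_nat N)" unfolding sum_x_def by (simp only: sum_distrib_right)
  finally show False using sums \<open>sum_y m \<noteq> 0\<close> two_le_N by simp
qed

lemma sum_squares_alpha_beta: "(\<Sum>m<N. (lam m)\<^sup>2) = alpha\<^sup>2 + (real N - 1) * beta\<^sup>2"
proof -
  have "alpha\<^sup>2 + (real N - 1) * beta\<^sup>2 = (cA * cB + (real N - 1) * ((1 - muA) * (1 - muB))) / (real N)\<^sup>2"
    unfolding alpha_def beta_def using cA_pos cB_pos muA muB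
    by (simp add: power_divide add_divide_distrib)
  also have "\<dots> = (1 + (real N - 1) * muA * muB) / real N"
    unfolding cA_def cB_def using N_pos by (simp add: field_simps power2_eq_square)
  finally show ?thesis using sum_squares by simp
qed

theorem mset_lam: "mset (map lam [0..<N]) = {#alpha#} + replicate_mset (N - 1) beta"
proof (rule mset_from_sum_of_squares)
  show "lam m = alpha \<or> lam m = beta \<or> lam m = 0" if "m < N" for m
    using lam_cases[OF that] by blast
qed (use alpha_once beta_less_alpha beta_pos sum_squares_alpha_beta in auto)

end

section \<open>The tensor-sum state of two designs\<close>

locale design_pair =
  A: design_gram a N PA muA + B: design_gram b N PB muB
  for a b N :: nat and PA PB :: "nat \<Rightarrow> complex mat" and muA muB :: real
begin

definition rho :: "complex mat" where
  "rho = (1 / of_nat N) \<cdot>\<^sub>m msum (a * b) (a * b) (\<lambda>k. kron (PA k) (PB k)) {..<N}"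

definition schmidt_value :: "nat \<Rightarrow> real" where
  "schmidt_value j = sqrt (A.gram_eigenvalue j * B.gram_eigenvalue j) / real N"

lemma rho_carrier: "rho \<in> carrier_mat (a * b) (a * b)"
  unfolding rho_def by simp

lemma rho_as_sum: "rho = msum (a * b) (a * b) (\<lambda>k. (1 / of_nat N) \<cdot>\<^sub>m kron (PA k) (PB k)) {..<N}"
  unfolding rho_def using A.carrier B.carrier by (intro smult_msum) (auto intro: kron_carrier_mat)

lemma mtrace_rho_mult_kron:
  assumes "X \<in> carrier_mat a a" "Y \<in> carrier_mat b b"
  shows "mtrace (rho * kron X Y) = (\<Sum>k<N. (1 / of_nat N) * mtrace (PA k * X) * mtrace (PB k * Y))"
  unfolding rho_as_sum using assms A.carrier B.carrier by (intro mtrace_kron_msum_mult) auto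

lemma mtrace_rho_sq: "mtrace (rho * rho) = of_real ((1 + (real N - 1) * muA * muB) / real N)"
proof -
  have "mtrace (rho * rho) = (\<Sum>l<N. (1 / of_nat N) * mtrace (rho * kron (PA l) (PB l)))"
    using rho_carrier A.carrier B.carrier by (subst (2) rho_as_sum, intro mtrace_mult_kron_msum) auto
  also have "\<dots> = (\<Sum>l<N. (1 / of_nat N) * ((1 / of_nat N) * (1 + (of_nat N - 1) * (of_real muA * of_real muB))))"
  proof (intro sum.cong refl arg_cong[where f = "\<lambda>z. _ * z"])
    fix l assume l: "l \<in> {..<N}"
    have "mtrace (rho * kron (PA l) (PB l)) = (\<Sum>k<N. (1 / of_nat N) * mtrace (PA k * PA l) * mtrace (PB k * PB l))"
      using l A.carrier B.carrier by (intro mtrace_rho_mult_kron) auto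
    also have "\<dots> = (1 / of_nat N) * (\<Sum>k<N. (if k = l then 1 else of_real muA * of_real muB) * 1)"
      unfolding sum_distrib_left using l A.gram B.gram by (intro sum.cong refl) auto
    also have "\<dots> = (1 / of_nat N) * (1 + (of_nat N - 1) * (of_real muA * of_real muB))"
      using l by (subst sum_gram_row) (auto simp: algebra_simps)
    finally show "mtrace (rho * kron (PA l) (PB l)) = \<dots>" .
  qed
  also have "\<dots> = of_real ((1 + (real N - 1) * muA * muB) / real N)"
    using A.size_pos by (simp add: field_simps power2_eq_square)
  finally show ?thesis .
qed

lemma schmidt_coeff_recombination:
  fixes x y :: "nat \<Rightarrow> complex"
  shows "(\<Sum>j<N. of_real (schmidt_value j) *
            ((\<Sum>k<N. of_real (A.schmidt_coeff j k) * x k) * (\<Sum>l<N. of_real (B.schmidt_coeff j l) * y l)))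
         = (1 / of_nat N) * (\<Sum>k<N. x k * y k)"
proof -
  have coeff: "schmidt_value j * A.schmidt_coeff j k * B.schmidt_coeff j l
       = householder N j k * householder N j l / real N" if "j < N" for j k l
    using A.gram_eigenvalue_pos[OF that] B.gram_eigenvalue_pos[OF that]
    unfolding schmidt_value_def A.schmidt_coeff_def B.schmidt_coeff_def
    by (simp add: real_sqrt_mult householder_sym[of N k j] householder_sym[of N l j] field_simps)
  have product: "c * ((\<Sum>k<N. f k) * (\<Sum>l<N. g l)) = (\<Sum>k<N. \<Sum>l<N. c * (f k * g l))" for c :: complex and f g
    unfolding sum_product by (simp add: sum_distrib_left)
  have "(\<Sum>j<N. of_real (schmidt_value j) *
            ((\<Sum>k<N. of_real (A.schmidt_coeff j k) * x k) * (\<Sum>l<N. of_real (B.schmidt_coeff j l) * y l)))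
     = (\<Sum>j<N. \<Sum>k<N. \<Sum>l<N. of_real (schmidt_value j * A.schmidt_coeff j k * B.schmidt_coeff j l) * (x k * y l))"
    unfolding product by (intro sum.cong refl) (simp add: algebra_simps)
  also have "\<dots> = (\<Sum>j<N. \<Sum>k<N. \<Sum>l<N. of_real (householder N j k * householder N j l / real N) * (x k * y l))"
    using coeff by (intro sum.cong refl) auto
  also have "\<dots> = (\<Sum>k<N. \<Sum>l<N. of_real ((\<Sum>j<N. householder N j k * householder N j l) / real N) * (x k * y l))"
    by (subst sum.swap, rule sum.cong[OF refl], subst sum.swap) (simp add: sum_distrib_right sum_divide_distrib)
  also have "\<dots> = (\<Sum>k<N. \<Sum>l<N. (if k = l then of_real (1 / real N) * (x k * y l) else 0))"
    using householder_orthogonal[OF A.size_pos] by (intro sum.cong refl) auto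
  also have "\<dots> = (1 / of_nat N) * (\<Sum>k<N. x k * y k)"
    by (simp add: sum_distrib_left)
  finally show ?thesis .
qed

lemma index_kron_schmidt_op:
  assumes "r < a * b" "c < a * b"
  shows "kron (A.schmidt_op j) (B.schmidt_op j) $$ (r, c)
    = (\<Sum>k<N. of_real (A.schmidt_coeff j k) * PA k $$ (r div b, c div b))
      * (\<Sum>l<N. of_real (B.schmidt_coeff j l) * PB l $$ (r mod b, c mod b))"
proof -
  have "0 < b" using assms by (cases b) auto
  then have "r div b < a" "c div b < a" "r mod b < b" "c mod b < b"
    using assms by (auto simp: less_mult_imp_div_less)
  then show ?thesis
    using assms A.schmidt_op_carrier[of j] B.schmidt_op_carrier[of j]
    by (subst index_kron) (auto simp: A.index_schmidt_op B.index_schmidt_op)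
qed

lemma rho_eq_schmidt_sum:
  "rho = msum (a * b) (a * b) (\<lambda>j. of_real (schmidt_value j) \<cdot>\<^sub>m kron (A.schmidt_op j) (B.schmidt_op j)) {..<N}"
proof (rule eq_matI)
  fix r c assume "r < dim_row (msum (a * b) (a * b) (\<lambda>j. of_real (schmidt_value j) \<cdot>\<^sub>m kron (A.schmidt_op j) (B.schmidt_op j)) {..<N})"
    "c < dim_col (msum (a * b) (a * b) (\<lambda>j. of_real (schmidt_value j) \<cdot>\<^sub>m kron (A.schmidt_op j) (B.schmidt_op j)) {..<N})"
  then have rc: "r < a * b" "c < a * b" by auto
  define x where "x k = PA k $$ (r div b, c div b)" for k
  define y where "y k = PB k $$ (r mod b, c mod b)" for k
  have "kron (PA k) (PB k) $$ (r, c) = x k * y k" if "k < N" for k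
    using rc A.carrier[OF that] B.carrier[OF that] unfolding x_def y_def by (subst index_kron) auto
  then have "rho $$ (r, c) = (1 / of_nat N) * (\<Sum>k<N. x k * y k)"
    using rc unfolding rho_def by simp
  also have "\<dots> = (\<Sum>j<N. of_real (schmidt_value j) * kron (A.schmidt_op j) (B.schmidt_op j) $$ (r, c))"
    unfolding schmidt_coeff_recombination[symmetric] index_kron_schmidt_op[OF rc] x_def y_def ..
  also have "\<dots> = msum (a * b) (a * b) (\<lambda>j. of_real (schmidt_value j) \<cdot>\<^sub>m kron (A.schmidt_op j) (B.schmidt_op j)) {..<N} $$ (r, c)"
  proof -
    have "dim_row (A.schmidt_op j) = a" "dim_col (A.schmidt_op j) = a"
      "dim_row (B.schmidt_op j) = b" "dim_col (B.schmidt_op j) = b" for j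
      using A.schmidt_op_carrier B.schmidt_op_carrier by auto
    then show ?thesis using rc by (auto intro!: sum.cong)
  qed
  finally show "rho $$ (r, c) = \<dots>" .
qed (auto simp: rho_def)

lemma op_schmidt_decomp_exists:
  assumes "(min a b)\<^sup>2 = N"
  shows "op_schmidt_decomp a b rho schmidt_value A.schmidt_op B.schmidt_op"
  unfolding op_schmidt_decomp_def Let_def assms
proof (intro conjI allI impI)
  fix k assume "k < N"
  then show "0 \<le> schmidt_value k"
    using A.gram_eigenvalue_pos B.gram_eigenvalue_pos unfolding schmidt_value_def
    by (intro divide_nonneg_nonneg real_sqrt_ge_zero mult_nonneg_nonneg) (auto simp: less_imp_le)
qed (simp_all add: A.schmidt_op_hermitian B.schmidt_op_hermitian A.schmidt_op_orthonormal
    B.schmidt_op_orthonormal rho_eq_schmidt_sum)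

lemma overlaps_not_both_zero:
  assumes n: "(min a b)\<^sup>2 = N" and N: "2 \<le> N"
  shows "muA \<noteq> 0 \<or> muB \<noteq> 0"
proof (rule ccontr)
  assume "\<not> (muA \<noteq> 0 \<or> muB \<noteq> 0)"
  then have "real N / real a = 1" "real N / real b = 1" using A.frame_eq B.frame_eq by auto
  then have "a = N" "b = N" using A.dim_pos B.dim_pos by (simp_all add: divide_eq_1_iff)
  with n have "N * N = N" by (simp add: power2_eq_square)
  with N show False by simp
qed

lemma schmidt_value_0: "schmidt_value 0 = 1 / sqrt (real (a * b))"
  using A.size_pos A.dim_pos B.dim_pos
  by (simp add: schmidt_value_def A.gram_eigenvalue_def B.gram_eigenvalue_def real_sqrt_divide real_sqrt_mult)

lemma schmidt_value_1:
  assumes "2 \<le> N"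
  shows "schmidt_value 1 = sqrt ((real a - 1) * (real b - 1) / real (a * b)) / (real N - 1)"
proof -
  have "(real N - 1)\<^sup>2 * ((1 - muA) * (1 - muB)) = ((real N - 1) * (1 - muA)) * ((real N - 1) * (1 - muB))"
    by (simp add: power2_eq_square algebra_simps)
  also have "\<dots> = (real N * (real a - 1) / real a) * (real N * (real b - 1) / real b)"
    using A.frame_complement B.frame_complement by simp
  also have "\<dots> = (real N)\<^sup>2 * ((real a - 1) * (real b - 1) / real (a * b))"
    by (simp add: power2_eq_square)
  finally have "sqrt ((real N - 1)\<^sup>2 * ((1 - muA) * (1 - muB))) = sqrt ((real N)\<^sup>2 * ((real a - 1) * (real b - 1) / real (a * b)))"
    by (simp only:)
  then have "(real N - 1) * sqrt ((1 - muA) * (1 - muB)) = real N * sqrt ((real a - 1) * (real b - 1) / real (a * b))"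
    using assms by (simp only: real_sqrt_mult real_sqrt_abs)
  then show ?thesis
    using assms by (simp add: schmidt_value_def B.gram_eigenvalue_def A.gram_eigenvalue_def field_simps)
qed

context
  fixes lam :: "nat \<Rightarrow> real" and G H :: "nat \<Rightarrow> complex mat"
  assumes decomp: "op_schmidt_decomp a b rho lam G H" and n: "(min a b)\<^sup>2 = N"
begin

lemma decomp_facts:
  shows lam_nonneg: "\<And>k. k < N \<Longrightarrow> 0 \<le> lam k"
    and G_carrier: "\<And>k. k < N \<Longrightarrow> G k \<in> carrier_mat a a"
    and H_carrier: "\<And>k. k < N \<Longrightarrow> H k \<in> carrier_mat b b"
    and G_orthonormal: "\<And>k l. k < N \<Longrightarrow> l < N \<Longrightarrow> mtrace (G k * G l) = (if k = l then 1 else 0)"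
    and H_orthonormal: "\<And>k l. k < N \<Longrightarrow> l < N \<Longrightarrow> mtrace (H k * H l) = (if k = l then 1 else 0)"
    and rho_eq_decomp: "rho = msum (a * b) (a * b) (\<lambda>k. of_real (lam k) \<cdot>\<^sub>m kron (G k) (H k)) {..<N}"
  using decomp unfolding op_schmidt_decomp_def Let_def n hermitian_mat_def by auto

lemma decomp_pairing:
  assumes "X \<in> carrier_mat a a" "Y \<in> carrier_mat b b"
  shows "(\<Sum>k<N. of_real (lam k) * mtrace (G k * X) * mtrace (H k * Y))
       = (\<Sum>k<N. (1 / of_nat N) * mtrace (PA k * X) * mtrace (PB k * Y))"
proof -
  have "(\<Sum>k<N. of_real (lam k) * mtrace (G k * X) * mtrace (H k * Y)) = mtrace (rho * kron X Y)"
    unfolding rho_eq_decomp using assms G_carrier H_carrier by (intro mtrace_kron_msum_mult[symmetric]) auto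
  then show ?thesis using mtrace_rho_mult_kron[OF assms] by simp
qed

lemma decomp_eq_x:
  assumes m: "m < N" and j: "j < N"
  shows "of_real (lam m) * mtrace (PA j * G m)
    = (\<Sum>k<N. (if k = j then 1 else of_real muA) * mtrace (PB k * H m)) / of_nat N"
proof -
  have "(\<Sum>k<N. of_real (lam k) * mtrace (G k * PA j) * mtrace (H k * H m))
      = (\<Sum>k<N. (of_real (lam k) * mtrace (G k * PA j)) * (if k = m then 1 else 0))"
    using m H_orthonormal by (intro sum.cong refl) auto
  also have "\<dots> = of_real (lam m) * mtrace (PA j * G m)"
    using m j A.carrier G_carrier by (simp add: sum_delta_right mtrace_mult_comm[of "G m" a a])
  finally show ?thesis
    using decomp_pairing[OF A.carrier[OF j] H_carrier[OF m]] j A.gram by (simp add: sum_divide_distrib)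
qed

lemma decomp_eq_y:
  assumes m: "m < N" and j: "j < N"
  shows "of_real (lam m) * mtrace (PB j * H m)
    = (\<Sum>k<N. (if k = j then 1 else of_real muB) * mtrace (PA k * G m)) / of_nat N"
proof -
  have "(\<Sum>k<N. of_real (lam k) * mtrace (G k * G m) * mtrace (H k * PB j))
      = (\<Sum>k<N. (of_real (lam k) * mtrace (H k * PB j)) * (if k = m then 1 else 0))"
    using m G_orthonormal by (intro sum.cong refl) auto
  also have "\<dots> = of_real (lam m) * mtrace (PB j * H m)"
    using m j B.carrier H_carrier by (simp add: sum_delta_right mtrace_mult_comm[of "H m" b b])
  finally show ?thesis
    using decomp_pairing[OF G_carrier[OF m] B.carrier[OF j]] j B.gram
    by (simp add: sum_divide_distrib mult.commute)
qed

lemma decomp_eq_xy: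
  assumes l: "l < N" and m: "m < N"
  shows "(\<Sum>k<N. mtrace (PA k * G l) * mtrace (PB k * H m)) / of_nat N = (if l = m then of_real (lam m) else 0)"
proof -
  have "(\<Sum>k<N. of_real (lam k) * mtrace (G k * G l) * mtrace (H k * H m))
      = (\<Sum>k<N. (of_real (lam k) * (if k = m then 1 else 0)) * (if k = l then 1 else 0))"
    using l m G_orthonormal H_orthonormal by (intro sum.cong refl) auto
  also have "\<dots> = (if l = m then of_real (lam m) else 0)"
    using l m by (simp add: sum_delta_right)
  finally show ?thesis
    using decomp_pairing[OF G_carrier[OF l] H_carrier[OF m]] by (simp add: sum_divide_distrib)
qed

lemma decomp_sum_squares: "(\<Sum>m<N. (lam m)\<^sup>2) = (1 + (real N - 1) * muA * muB) / real N"
proof -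
  have "mtrace (rho * rho) = (\<Sum>l<N. of_real (lam l) * mtrace (rho * kron (G l) (H l)))"
    using rho_carrier G_carrier H_carrier by (subst (2) rho_eq_decomp, intro mtrace_mult_kron_msum) auto
  also have "\<dots> = (\<Sum>l<N. of_real (lam l) * of_real (lam l))"
  proof (intro sum.cong refl arg_cong[where f = "\<lambda>z. _ * z"])
    fix l assume "l \<in> {..<N}"
    then have "mtrace (rho * kron (G l) (H l)) = (\<Sum>k<N. of_real (lam k) * mtrace (G k * G l) * mtrace (H k * H l))"
      unfolding rho_eq_decomp using G_carrier H_carrier by (intro mtrace_kron_msum_mult) auto
    also have "\<dots> = (\<Sum>k<N. of_real (lam k) * (if k = l then 1 else 0))"
      using \<open>l \<in> {..<N}\<close> G_orthonormal H_orthonormal by (intro sum.cong refl) auto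
    finally show "mtrace (rho * kron (G l) (H l)) = of_real (lam l)"
      using \<open>l \<in> {..<N}\<close> by (simp add: sum_delta_right)
  qed
  finally have "mtrace (rho * rho) = of_real (\<Sum>l<N. (lam l)\<^sup>2)" by (simp add: power2_eq_square)
  then show ?thesis using mtrace_rho_sq by (simp only: of_real_eq_iff)
qed

lemma decomp_schmidt_equations:
  assumes N: "2 \<le> N"
  shows "schmidt_equations N muA muB lam (\<lambda>m k. mtrace (PA k * G m)) (\<lambda>m k. mtrace (PB k * H m))"
  using N lam_nonneg A.overlap_nonneg A.overlap_less_1 B.overlap_nonneg B.overlap_less_1
    overlaps_not_both_zero[OF n N] decomp_eq_x decomp_eq_y decomp_eq_xy decomp_sum_squares
  by unfold_locales auto

lemma decomp_coeffs_mset: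
  "mset (map lam [0..<N]) = {#schmidt_value 0#} + replicate_mset (N - 1) (schmidt_value 1)"
proof (cases "N = 1")
  case True
  then have "(lam 0)\<^sup>2 = 1" using decomp_sum_squares by simp
  then have "lam 0 = 1" using lam_nonneg[of 0] True by (simp add: power2_eq_1_iff)
  moreover have "real a = 1" "real b = 1" using True A.frame_eq B.frame_eq A.dim_pos B.dim_pos by simp_all
  ultimately show ?thesis using True schmidt_value_0 by simp
next
  case False
  then have N: "2 \<le> N" using A.size_pos by simp
  interpret schmidt_equations N muA muB lam "\<lambda>m k. mtrace (PA k * G m)" "\<lambda>m k. mtrace (PB k * H m)"
    by (rule decomp_schmidt_equations[OF N])
  have "alpha = schmidt_value 0" "beta = schmidt_value 1"
    unfolding alpha_def beta_def cA_def cB_def schmidt_value_def A.gram_eigenvalue_def B.gram_eigenvalue_def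
    using A.frame_eq B.frame_eq by simp_all
  then show ?thesis using mset_lam by simp
qed

end

theorem op_schmidt_coefficients:
  assumes "(min a b)\<^sup>2 = N"
  shows "(\<exists>lam G H. op_schmidt_decomp a b rho lam G H) \<and>
    (\<forall>lam G H. op_schmidt_decomp a b rho lam G H \<longrightarrow>
       mset (map lam [0..<N]) = {#schmidt_value 0#} + replicate_mset (N - 1) (schmidt_value 1))"
  using op_schmidt_decomp_exists[OF assms] decomp_coeffs_mset[OF _ assms] by blast

end

lemma sqrt_min_max_ratios:
  fixes a b :: nat
  assumes "2 \<le> min a b"
  shows "sqrt ((real a - 1) * (real b - 1) / real (a * b)) / (real ((min a b)\<^sup>2) - 1)
    = sqrt ((real (max a b) - 1) / (real (max a b) * (real (min a b) ^ 2 - 1))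
        * ((real (min a b) - 1) / (real (min a b) * (real (min a b) ^ 2 - 1))))"
proof -
  define r where "r = real (min a b) ^ 2 - 1"
  have "real (2 * 2) \<le> real (min a b * min a b)"
    using assms by (intro of_nat_mono mult_le_mono) auto
  then have r: "0 < r" unfolding r_def by (simp add: power2_eq_square)
  have "real ((min a b)\<^sup>2) - 1 = r" unfolding r_def by simp
  moreover have "(real (max a b) - 1) / (real (max a b) * r) * ((real (min a b) - 1) / (real (min a b) * r))
      = ((real a - 1) * (real b - 1) / real (a * b)) / r\<^sup>2"
    by (simp add: max_def min_def power2_eq_square mult.commute)
  ultimately show ?thesis
    unfolding r_def[symmetric] using r by (simp add: real_sqrt_divide real_sqrt_mult)
qed

theorem theorem2:
  fixes dA dB :: nat and PA PB :: "nat \<Rightarrow> complex mat"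
  defines "d \<equiv> min dA dB" and "D \<equiv> max dA dB"
  assumes "dA \<ge> 1" and "dB \<ge> 1"
    and "quantum_design dA (d^2) PA" and "regular_r1 dA (d^2) PA"
    and "coherent dA (d^2) PA" and "degree1 (d^2) PA"
    and "quantum_design dB (d^2) PB" and "regular_r1 dB (d^2) PB"
    and "coherent dB (d^2) PB" and "degree1 (d^2) PB"
  defines "rho \<equiv> (1 / of_nat (d^2)) \<cdot>\<^sub>m msum (dA * dB) (dA * dB) (\<lambda>k. kron (PA k) (PB k)) {..<d^2}"
    and "\<alpha> \<equiv> 1 / sqrt (real (D * d))"
    and "\<beta> \<equiv> sqrt ((real D - 1) / (real D * (real d ^ 2 - 1)) * ((real d - 1) / (real d * (real d ^ 2 - 1))))"
  shows "(\<exists>lam G H. op_schmidt_decomp dA dB rho lam G H) \<and>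
         (\<forall>lam G H. op_schmidt_decomp dA dB rho lam G H \<longrightarrow>
            mset (map lam [0..<d^2]) = {#\<alpha>#} + replicate_mset (d^2 - 1) \<beta>)"
proof -
  have d: "1 \<le> d" "d\<^sup>2 \<le> dA\<^sup>2" "d\<^sup>2 \<le> dB\<^sup>2"
    unfolding d_def using assms(3,4) by (auto intro: power_mono)
  obtain muA where "design_gram dA (d\<^sup>2) PA muA"
    using quantum_design_gram[OF assms(5-8,3)] d by auto
  moreover obtain muB where "design_gram dB (d\<^sup>2) PB muB"
    using quantum_design_gram[OF assms(9-12,4)] d by auto
  ultimately interpret pair: design_pair dA dB "d\<^sup>2" PA PB muA muB
    by (simp add: design_pair_def)
  have "rho = pair.rho" unfolding rho_def pair.rho_def ..
  moreover have "pair.schmidt_value 0 = \<alpha>"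
    unfolding pair.schmidt_value_0 \<alpha>_def by (simp add: D_def d_def max_def min_def mult.commute)
  moreover have "replicate_mset (d\<^sup>2 - 1) (pair.schmidt_value 1) = replicate_mset (d\<^sup>2 - 1) \<beta>"
  proof (cases "d = 1")
    case False
    with d(1) have "2 \<le> d" by simp
    then have "pair.schmidt_value 1 = sqrt ((real dA - 1) * (real dB - 1) / real (dA * dB)) / (real (d\<^sup>2) - 1)"
      by (intro pair.schmidt_value_1 order.trans[OF _ self_le_power]) auto
    also have "\<dots> = \<beta>"
      unfolding \<beta>_def d_def D_def using \<open>2 \<le> d\<close>[unfolded d_def] by (rule sqrt_min_max_ratios)
    finally show ?thesis by simp
  qed simp
  moreover have "(min dA dB)\<^sup>2 = d\<^sup>2" unfolding d_def ..
  ultimately show ?thesis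
    using pair.op_schmidt_coefficients by simp
qed

end
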